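(* Let $(S,\mathscr{S})$ be a measurable space, $n\le N$, and $X=(X_1,\ldots,X_n)$ an exchangeable random element of $S^n$. If $X$ is $N$-extendible, then $\|\mathcal E^N_n\|=1$, where \[ \|\mathcal E^N_n\|:=\sup\Big\{|\mathbb{E}\,g(X_1,\ldots,X_n)|: g:S^n\to\mathbb{R}\text{ bounded measurable},\ |U^N_ng(x)|\le1\ \forall x\in S^N\Big\}. \]
   Context: $X$ is exchangeable if its law is invariant under all permutations of coordinates; $X$ is $N$-extendible if there is an exchangeable random element $(Y_1,\ldots,Y_N)$ of $S^N$ with $(Y_1,\ldots,Y_n)$ equal in distribution to $X$. With $\mathfrak S[n,N]$ the set of injections $\{1,\ldots,n\}\to\{1,\ldots,N\}$ and $(N)_n=N(N-1)\cdots(N-n+1)$, $U^N_ng(x_1,\ldots,x_N)=\frac1{(N)_n}\sum_{\sigma\in\mathfrak S[n,N]}g(x_{\sigma(1)},\ldots,x_{\sigma(n)})$. *)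

theory Defs
  imports "HOL-Probability.Probability"
begin

abbreviation powM :: "'a measure \<Rightarrow> nat \<Rightarrow> (nat \<Rightarrow> 'a) measure" where
  "powM M n \<equiv> PiM {0..<n} (\<lambda>_. M)"

text \<open>Injections {0..<n} -> {0..<N} (extensional, so that the set is finite).\<close>
definition inj_maps :: "nat \<Rightarrow> nat \<Rightarrow> (nat \<Rightarrow> nat) set" where
  "inj_maps n N = {\<sigma> \<in> {0..<n} \<rightarrow>\<^sub>E {0..<N}. inj_on \<sigma> {0..<n}}"

definition falling :: "nat \<Rightarrow> nat \<Rightarrow> nat" where
  "falling N n = (\<Prod>i<n. N - i)"

definition U_op :: "nat \<Rightarrow> nat \<Rightarrow> ((nat \<Rightarrow> 'a) \<Rightarrow> real) \<Rightarrow> (nat \<Rightarrow> 'a) \<Rightarrow> real" where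
  "U_op n N g x = (1 / real (falling N n)) *
     (\<Sum>\<sigma>\<in>inj_maps n N. g (\<lambda>i\<in>{0..<n}. x (\<sigma> i)))"

definition exchangeable :: "'a measure \<Rightarrow> nat \<Rightarrow> 'w measure \<Rightarrow> ('w \<Rightarrow> nat \<Rightarrow> 'a) \<Rightarrow> bool" where
  "exchangeable M n P X \<longleftrightarrow>
     (\<forall>\<sigma>. \<sigma> permutes {0..<n} \<longrightarrow>
        distr P (powM M n) (\<lambda>\<omega>. \<lambda>i\<in>{0..<n}. X \<omega> (\<sigma> i)) = distr P (powM M n) X)"

text \<open>X is N-extendible: there is an exchangeable random element Y of S^N whose first
n coordinates have the law of X. Any such Y may be taken to be the identity on
(S^N, Q) for its law Q, so we quantify over exchangeable laws Q on S^N.\<close>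
definition extendible :: "'a measure \<Rightarrow> nat \<Rightarrow> nat \<Rightarrow> 'w measure \<Rightarrow> ('w \<Rightarrow> nat \<Rightarrow> 'a) \<Rightarrow> bool" where
  "extendible M n N P X \<longleftrightarrow>
     (\<exists>Q. prob_space Q \<and> sets Q = sets (powM M N) \<and>
        exchangeable M N Q (\<lambda>y. y) \<and>
        distr Q (powM M n) (\<lambda>y. \<lambda>i\<in>{0..<n}. y i) = distr P (powM M n) X)"

text \<open>The norm ||E^N_n||, as an extended real (so the supremum is always defined).\<close>
definition E_norm :: "'a measure \<Rightarrow> nat \<Rightarrow> nat \<Rightarrow> 'w measure \<Rightarrow> ('w \<Rightarrow> nat \<Rightarrow> 'a) \<Rightarrow> ereal" where
  "E_norm M n N P X =
     (SUP g \<in> {g. g \<in> borel_measurable (powM M n) \<and>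
                 (\<exists>B. \<forall>x\<in>space (powM M n). \<bar>g x\<bar> \<le> B) \<and>
                 (\<forall>x\<in>space (powM M N). \<bar>U_op n N g x\<bar> \<le> 1)}.
        ereal \<bar>integral\<^sup>L P (\<lambda>\<omega>. g (X \<omega>))\<bar>)"

end

theory Submission
  imports Defs
begin

text \<open>If Y is an exchangeable extension of X, then for every injection \<sigma> the
vector (Y \<sigma>(1), ..., Y \<sigma>(n)) has the law of (Y 1, ..., Y n), which is the law
of X. Averaging over \<sigma> gives E g(X) = E U^N_n g(Y), so |E g(X)| \<le> 1 whenever
|U^N_n g| \<le> 1; the constant g = 1 has U^N_n g = 1 and attains the bound.\<close>

lemma card_inj_maps: "card (inj_maps n N) = falling N n"
proof -
  have "card (inj_maps n N) =
      card {0..<N} ^ (card {0..<n} - card {0..<n}) * prod ((-) (card {0..<N})) {0..<card {0..<n}}"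
    unfolding inj_maps_def by (rule card_inj_on_subset_funcset) auto
  then show ?thesis by (simp add: falling_def atLeast0LessThan)
qed

lemma falling_pos: "n \<le> N \<Longrightarrow> falling N n > 0"
  unfolding falling_def by (auto intro!: prod_pos)

lemma U_op_const:
  assumes "n \<le> N"
  shows "U_op n N (\<lambda>_. c) x = c"
  using falling_pos[OF assms] by (simp add: U_op_def card_inj_maps)

lemma inj_maps_extends_to_permutation:
  assumes "\<sigma> \<in> inj_maps n N" "n \<le> N"
  obtains \<pi> where "\<pi> permutes {0..<N}" "\<And>i. i < n \<Longrightarrow> \<pi> i = \<sigma> i"
proof -
  let ?A = "{0..<n}" and ?B = "{0..<N}"
  let ?C = "\<sigma> ` ?A"
  have inj: "inj_on \<sigma> ?A" and CB: "?C \<subseteq> ?B"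
    using assms(1) unfolding inj_maps_def by auto
  have "card (?B - ?A) = card (?B - ?C)"
    using assms(2) card_image[OF inj] CB
    by (simp add: card_Diff_subset finite_subset)
  then obtain \<tau> where \<tau>: "bij_betw \<tau> (?B - ?A) (?B - ?C)"
    by (meson finite_Diff finite_atLeastLessThan finite_same_card_bij)
  have "bij_betw (\<lambda>x. if x \<in> ?A then \<sigma> x else \<tau> x) (?A \<union> (?B - ?A)) (?C \<union> (?B - ?C))"
    using inj by (intro bij_betw_disjoint_Un[OF _ \<tau>]) (auto simp: bij_betw_imageI)
  moreover have "?A \<union> (?B - ?A) = ?B" "?C \<union> (?B - ?C) = ?B"
    using assms(2) CB by auto
  ultimately have bij: "bij_betw (\<lambda>x. if x \<in> ?A then \<sigma> x else \<tau> x) ?B ?B"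
    by simp
  define \<pi> where "\<pi> x = (if x \<in> ?B then if x \<in> ?A then \<sigma> x else \<tau> x else x)" for x
  have "bij_betw \<pi> ?B ?B"
    using bij by (rule bij_betw_cong[THEN iffD1, rotated]) (auto simp: \<pi>_def)
  then have "\<pi> permutes ?B"
    by (rule bij_imp_permutes) (auto simp: \<pi>_def)
  moreover have "\<pi> i = \<sigma> i" if "i < n" for i
    using that assms(2) by (auto simp: \<pi>_def)
  ultimately show thesis by (rule that)
qed

lemma measurable_reindex:
  assumes "\<sigma> \<in> I \<rightarrow> J"
  shows "(\<lambda>y. \<lambda>i\<in>I. y (\<sigma> i)) \<in> measurable (PiM J (\<lambda>_. M)) (PiM I (\<lambda>_. M))"
  by (intro measurable_restrict measurable_component_singleton) (use assms in auto)

lemma inj_maps_funcset: "\<sigma> \<in> inj_maps n N \<Longrightarrow> \<sigma> \<in> {0..<n} \<rightarrow> {0..<N}"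
  unfolding inj_maps_def by auto

lemma measurable_restrict_powM:
  assumes "n \<le> N"
  shows "(\<lambda>y. \<lambda>i\<in>{0..<n}. y i) \<in> measurable (powM M N) (powM M n)"
  using measurable_reindex[of id "{0..<n}" "{0..<N}" M] assms by auto

lemma exchangeable_integral_reindex:
  fixes h :: "(nat \<Rightarrow> 'a) \<Rightarrow> real"
  assumes Q: "sets Q = sets (powM M N)" "exchangeable M N Q (\<lambda>y. y)"
    and \<sigma>: "\<sigma> \<in> inj_maps n N" and "n \<le> N"
    and h: "h \<in> borel_measurable (powM M n)"
  shows "(\<integral>y. h (\<lambda>i\<in>{0..<n}. y (\<sigma> i)) \<partial>Q) = (\<integral>y. h (\<lambda>i\<in>{0..<n}. y i) \<partial>Q)"
proof -
  obtain \<pi> where \<pi>: "\<pi> permutes {0..<N}" and \<pi>\<sigma>: "\<And>i. i < n \<Longrightarrow> \<pi> i = \<sigma> i"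
    using inj_maps_extends_to_permutation[OF \<sigma> \<open>n \<le> N\<close>] by blast
  define f where "f y = h (\<lambda>i\<in>{0..<n}. y i)" for y
  define permute where "permute y = (\<lambda>i\<in>{0..<N}. y (\<pi> i))" for y :: "nat \<Rightarrow> 'a"
  have f: "f \<in> borel_measurable (powM M N)"
    unfolding f_def using measurable_comp[OF measurable_restrict_powM[OF \<open>n \<le> N\<close>] h]
    by (simp add: comp_def)
  have permute: "permute \<in> measurable Q (powM M N)"
    unfolding measurable_cong_sets[OF Q(1) refl] permute_def
    using permutes_in_image[OF \<pi>] by (intro measurable_reindex) auto
  have law: "distr Q (powM M N) permute = distr Q (powM M N) (\<lambda>y. y)"
    using Q(2) \<pi> unfolding exchangeable_def permute_def by blast
  have "(\<integral>y. h (\<lambda>i\<in>{0..<n}. y (\<sigma> i)) \<partial>Q) = (\<integral>y. f (permute y) \<partial>Q)"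
    using \<pi>\<sigma> \<open>n \<le> N\<close> unfolding f_def permute_def
    by (intro Bochner_Integration.integral_cong refl arg_cong[where f = h]) auto
  also have "\<dots> = integral\<^sup>L (distr Q (powM M N) permute) f"
    by (rule integral_distr[OF permute f, symmetric])
  also have "\<dots> = (\<integral>y. f y \<partial>Q)"
    unfolding law by (rule integral_distr[OF measurable_ident_sets[OF Q(1)] f])
  finally show ?thesis
    unfolding f_def .
qed

lemma integral_U_op:
  fixes g :: "(nat \<Rightarrow> 'a) \<Rightarrow> real"
  assumes "prob_space Q" and Q: "sets Q = sets (powM M N)" "exchangeable M N Q (\<lambda>y. y)"
    and "n \<le> N"
    and g: "g \<in> borel_measurable (powM M n)" "\<And>x. x \<in> space (powM M n) \<Longrightarrow> \<bar>g x\<bar> \<le> B"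
  shows "integrable Q (U_op n N g)"
    and "(\<integral>y. U_op n N g y \<partial>Q) = (\<integral>y. g (\<lambda>i\<in>{0..<n}. y i) \<partial>Q)"
proof -
  interpret prob_space Q by fact
  define g\<sigma> where "g\<sigma> = (\<lambda>(\<sigma> :: nat \<Rightarrow> nat) y. g (\<lambda>i\<in>{0..<n}. y (\<sigma> i)))"
  have U: "U_op n N g = (\<lambda>y. 1 / real (falling N n) * (\<Sum>\<sigma>\<in>inj_maps n N. g\<sigma> \<sigma> y))"
    by (simp add: U_op_def g\<sigma>_def fun_eq_iff)
  have integrable: "integrable Q (g\<sigma> \<sigma>)" if "\<sigma> \<in> inj_maps n N" for \<sigma>
  proof (rule integrable_const_bound[where B = B])
    have "(\<lambda>y. \<lambda>i\<in>{0..<n}. y (\<sigma> i)) \<in> measurable Q (powM M n)"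
      unfolding measurable_cong_sets[OF Q(1) refl]
      by (rule measurable_reindex[OF inj_maps_funcset[OF that]])
    from measurable_space[OF this] measurable_comp[OF this g(1)]
    show "AE y in Q. norm (g\<sigma> \<sigma> y) \<le> B" "g\<sigma> \<sigma> \<in> borel_measurable Q"
      using g(2) by (auto simp: g\<sigma>_def comp_def)
  qed
  then show "integrable Q (U_op n N g)"
    unfolding U by auto
  have "(\<integral>y. U_op n N g y \<partial>Q) = 1 / real (falling N n) * (\<Sum>\<sigma>\<in>inj_maps n N. integral\<^sup>L Q (g\<sigma> \<sigma>))"
    unfolding U by (simp add: integrable)
  also have "\<dots> = 1 / real (falling N n) * (\<Sum>\<sigma>\<in>inj_maps n N. \<integral>y. g (\<lambda>i\<in>{0..<n}. y i) \<partial>Q)"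
    unfolding g\<sigma>_def using exchangeable_integral_reindex[OF Q _ \<open>n \<le> N\<close> g(1)] by simp
  also have "\<dots> = (\<integral>y. g (\<lambda>i\<in>{0..<n}. y i) \<partial>Q)"
    using falling_pos[OF \<open>n \<le> N\<close>] by (simp add: card_inj_maps)
  finally show "(\<integral>y. U_op n N g y \<partial>Q) = (\<integral>y. g (\<lambda>i\<in>{0..<n}. y i) \<partial>Q)" .
qed

lemma extendible_abs_expectation_le_one:
  fixes g :: "(nat \<Rightarrow> 'a) \<Rightarrow> real"
  assumes X: "X \<in> measurable P (powM M n)" and "n \<le> N" and "extendible M n N P X"
    and g: "g \<in> borel_measurable (powM M n)" "\<And>x. x \<in> space (powM M n) \<Longrightarrow> \<bar>g x\<bar> \<le> B"
    and U: "\<And>x. x \<in> space (powM M N) \<Longrightarrow> \<bar>U_op n N g x\<bar> \<le> 1"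
  shows "\<bar>\<integral>\<omega>. g (X \<omega>) \<partial>P\<bar> \<le> 1"
proof -
  obtain Q where "prob_space Q" and Q: "sets Q = sets (powM M N)" "exchangeable M N Q (\<lambda>y. y)"
    and law: "distr Q (powM M n) (\<lambda>y. \<lambda>i\<in>{0..<n}. y i) = distr P (powM M n) X"
    using \<open>extendible M n N P X\<close> unfolding extendible_def by blast
  interpret Q: prob_space Q by fact
  have U_op: "integrable Q (U_op n N g)" "(\<integral>y. U_op n N g y \<partial>Q) = (\<integral>y. g (\<lambda>i\<in>{0..<n}. y i) \<partial>Q)"
    using integral_U_op[OF \<open>prob_space Q\<close> Q \<open>n \<le> N\<close> g(1)] g(2) by blast+
  have restrict: "(\<lambda>y. \<lambda>i\<in>{0..<n}. y i) \<in> measurable Q (powM M n)"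
    unfolding measurable_cong_sets[OF Q(1) refl] by (rule measurable_restrict_powM[OF \<open>n \<le> N\<close>])
  have "(\<integral>\<omega>. g (X \<omega>) \<partial>P) = integral\<^sup>L (distr P (powM M n) X) g"
    by (rule integral_distr[OF X g(1), symmetric])
  also have "\<dots> = (\<integral>y. g (\<lambda>i\<in>{0..<n}. y i) \<partial>Q)"
    unfolding law[symmetric] by (rule integral_distr[OF restrict g(1)])
  also have "\<dots> = (\<integral>y. U_op n N g y \<partial>Q)"
    using U_op by simp
  also have "\<bar>\<dots>\<bar> \<le> (\<integral>y. \<bar>U_op n N g y\<bar> \<partial>Q)"
    by (rule integral_abs_bound)
  also have "\<dots> \<le> (\<integral>y. 1 \<partial>Q)"
    using U_op(1) U sets_eq_imp_space_eq[OF Q(1)] by (intro integral_mono) auto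
  finally show ?thesis by (simp add: Q.prob_space)
qed

theorem lemma7:
  fixes M :: "'a measure" and P :: "'w measure" and X :: "'w \<Rightarrow> nat \<Rightarrow> 'a"
    and n N :: nat
  assumes "prob_space P"
    and "X \<in> measurable P (powM M n)"
    and "n \<le> N"
    and "exchangeable M n P X"
    and "extendible M n N P X"
  shows "E_norm M n N P X = 1"
proof -
  interpret prob_space P by fact
  let ?S = "{g. g \<in> borel_measurable (powM M n) \<and>
                 (\<exists>B. \<forall>x\<in>space (powM M n). \<bar>g x\<bar> \<le> B) \<and>
                 (\<forall>x\<in>space (powM M N). \<bar>U_op n N g x\<bar> \<le> 1)}"
  have "U_op n N (\<lambda>_. 1) x = 1" for x :: "nat \<Rightarrow> 'a"
    by (rule U_op_const[OF assms(3)])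
  then have "(\<lambda>_. 1) \<in> ?S"
    by auto
  moreover have "\<bar>\<integral>\<omega>. g (X \<omega>) \<partial>P\<bar> \<le> 1" if "g \<in> ?S" for g
    using that extendible_abs_expectation_le_one[OF assms(2,3,5)] by blast
  ultimately show ?thesis
    unfolding E_norm_def
    by (intro antisym SUP_least SUP_upper2[where i = "\<lambda>_. 1"]) (auto simp: prob_space)
qed

end
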